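(* Consider the closed-loop system $\dot x(t)=f\big(x(t),k(x(t_{k(t)}))\big)$ described in the context, with the control updates generated by the ideal sampling logic based on condition $$\gamma_2(4\|e(t)\|)\le \lambda(1-c)V(x(t)),\qquad c\in(0,1),$$ and suppose that there is $\mu>0$ with $\gamma_2(4r)\le \mu\,\alpha_1(r)$ for all $r\ge 0$. Then, for every DoS interval $H_n=[h_n,h_n+\tau_n[$, the state satisfies $$\|x(t_{k(h_n)})\|\le \tfrac14\,\gamma_2^{-1}\big(\lambda(1-c)V(x(h_n))\big)+\tfrac14\,\gamma_2^{-1}\big(\mu V(x(h_n))\big)$$ over the domain of existence of the solution $x$.
   Context: Plant: $\dot x=f(x,u)$, $x\in\mathbb R^{n_x}$. There is a smooth feedback $u=k(x)$, a smooth function $V$, class $\mathcal K_\infty$ functions $\alpha_1,\alpha_2,\gamma_2$ and $\lambda>0$ such that for all $x,e$: $\alpha_1(\|x\|)\le V(x)\le\alpha_2(\|x\|)$ and $\nabla V(x)f(x,k(x+e))\le-\lambda V(x)+\gamma_2(\|e\|)$. Norms are Euclidean. DoS: a sequence $\{h_n\}_{n\in\mathbb N}$, $h_0\ge0$, and durations $\tau_n>0$ define DoS intervals $H_n=[h_n,h_n+\tau_n[$ during which no information is transmitted from sensor to actuator. $\Theta(t):=[0,t]\setminus\bigcup_n H_n$ and $\Xi(t):=\bigcup_n H_n\cap[0,t]$. Given control update (sampling) times $\{t_k\}_{k\in\mathbb N}$ with $t_0=0$, let $k(t):=-1$ if $\Theta(t)=\emptyset$ and otherwise $k(t):=\sup\{k\in\mathbb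 N: t_k\in\Theta(t)\}$ (index of the last successful update); with the convention $x(t_{-1}):=0$ (so $u=0$ if $h_0=0$ at start-up). The applied input is $u(t)=k(x(t_{k(t)}))$, and $e(t):=x(t_{k(t)})-x(t)$ is the measurement error, so that $\dot x=f(x,k(x+e))$. Ideal sampling logic: given $t_k$, (i) if $t_k$ does not belong to any DoS interval, $t_{k+1}$ is the infimal time larger than $t_k$ at which the condition $\gamma_2(4\|e(t)\|)\le\lambda(1-c)V(x(t))$ is violated; (ii) if $t_k\in H_n$, then $t_{k+1}:=h_n+\tau_n$. *)

theory Defs
  imports "HOL-Analysis.Analysis"
begin

definition class_K_inf :: "(real \<Rightarrow> real) \<Rightarrow> bool" where
  "class_K_inf \<alpha> \<longleftrightarrow> continuous_on {0..} \<alpha> \<and> \<alpha> 0 = 0 \<and> strict_mono_on {0..} \<alpha>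
      \<and> filterlim \<alpha> at_top at_top"

definition Kinv :: "(real \<Rightarrow> real) \<Rightarrow> real \<Rightarrow> real" where
  "Kinv \<gamma> = inv_into {0..} \<gamma>"

definition DoS_int :: "(nat \<Rightarrow> real) \<Rightarrow> (nat \<Rightarrow> real) \<Rightarrow> nat \<Rightarrow> real set" where
  "DoS_int h \<tau> n = {h n ..< h n + \<tau> n}"

definition DoS_set :: "(nat \<Rightarrow> real) \<Rightarrow> (nat \<Rightarrow> real) \<Rightarrow> real set" where
  "DoS_set h \<tau> = (\<Union>n. DoS_int h \<tau> n)"

definition Theta :: "(nat \<Rightarrow> real) \<Rightarrow> (nat \<Rightarrow> real) \<Rightarrow> real \<Rightarrow> real set" where
  "Theta h \<tau> t = {0..t} - DoS_set h \<tau>"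

text \<open>Index k(t) of the last successful update (-1 if Theta(t) is empty).
  Update times are extended reals (value \<infinity> = no further update).\<close>
definition last_idx :: "(nat \<Rightarrow> real) \<Rightarrow> (nat \<Rightarrow> real) \<Rightarrow> (nat \<Rightarrow> ereal) \<Rightarrow> real \<Rightarrow> int" where
  "last_idx h \<tau> ts t =
     (if Theta h \<tau> t = {} then -1
      else int (Sup {k. ts k \<in> ereal ` Theta h \<tau> t}))"

definition held_state :: "(nat \<Rightarrow> real) \<Rightarrow> (nat \<Rightarrow> real) \<Rightarrow> (nat \<Rightarrow> ereal) \<Rightarrow> (real \<Rightarrow> 'a::real_vector)
     \<Rightarrow> real \<Rightarrow> 'a" where
  "held_state h \<tau> ts x t =
     (if last_idx h \<tau> ts t = -1 then 0
      else x (real_of_ereal (ts (nat (last_idx h \<tau> ts t)))))"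

end

theory Submission
  imports Defs
begin

text \<open>At the start h n of a DoS interval the held state is x(t_k) for the last successful
  update t_k < h n. No update happens in ]t_k, h n[: it would either be successful itself or lie
  in an earlier DoS interval, whose end is then a later successful update. Hence the triggering
  condition never failed on ]t_k, h n[, and by continuity it holds at h n:
  gamma2(4 |x(t_k) - x(h n)|) \<le> lam (1 - c) V(x(h n)). The assumption on mu gives
  gamma2(4 |x(h n)|) \<le> mu V(x(h n)), and the triangle inequality combines the two bounds.\<close>

lemma class_K_inf_nonneg:
  assumes "class_K_inf \<gamma>" and "u \<ge> 0"
  shows "\<gamma> u \<ge> 0"
proof -
  have "strict_mono_on {0..} \<gamma>" "\<gamma> 0 = 0"
    using assms(1) by (auto simp: class_K_inf_def)
  then show ?thesis
    using assms(2) unfolding strict_mono_on_def by (metis atLeast_iff less_eq_real_def order_refl)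
qed

lemma class_K_inf_surj:
  assumes "class_K_inf \<gamma>" and "y \<ge> 0"
  shows "y \<in> \<gamma> ` {0..}"
proof -
  have lim: "filterlim \<gamma> at_top at_top" and cont: "continuous_on {0..} \<gamma>" and "\<gamma> 0 = 0"
    using assms(1) by (auto simp: class_K_inf_def)
  obtain N where N: "\<And>z. z \<ge> N \<Longrightarrow> \<gamma> z \<ge> y"
    using lim by (auto simp: filterlim_at_top eventually_at_top_linorder)
  define b where "b = max N 0"
  have "continuous_on {0..b} \<gamma>"
    using cont by (rule continuous_on_subset) auto
  then obtain z where "0 \<le> z" "z \<le> b" "\<gamma> z = y"
    using IVT'[of \<gamma> 0 y b] N[of b] \<open>\<gamma> 0 = 0\<close> assms(2) by (auto simp: b_def)
  then show ?thesis by auto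
qed

lemma Kinv_nonneg_inverse:
  assumes "class_K_inf \<gamma>" and "y \<ge> 0"
  shows "Kinv \<gamma> y \<ge> 0" and "\<gamma> (Kinv \<gamma> y) = y"
  using inv_into_into[OF class_K_inf_surj[OF assms]] f_inv_into_f[OF class_K_inf_surj[OF assms]]
  by (auto simp: Kinv_def)

lemma le_Kinv_if_le:
  assumes K: "class_K_inf \<gamma>" and "u \<ge> 0" and "\<gamma> u \<le> y"
  shows "u \<le> Kinv \<gamma> y"
proof (rule ccontr)
  have y: "y \<ge> 0"
    using class_K_inf_nonneg[OF K \<open>u \<ge> 0\<close>] \<open>\<gamma> u \<le> y\<close> by linarith
  assume "\<not> u \<le> Kinv \<gamma> y"
  then have "\<gamma> (Kinv \<gamma> y) < \<gamma> u"
    using K Kinv_nonneg_inverse(1)[OF K y] \<open>u \<ge> 0\<close>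
    by (auto simp: class_K_inf_def strict_mono_on_def)
  then show False
    using Kinv_nonneg_inverse(2)[OF K y] \<open>\<gamma> u \<le> y\<close> by simp
qed

lemma norm_le_Kinv_sum:
  assumes K: "class_K_inf \<gamma>"
    and "\<gamma> (4 * norm (y - z)) \<le> A" and "\<gamma> (4 * norm z) \<le> B"
  shows "norm y \<le> 1/4 * Kinv \<gamma> A + 1/4 * Kinv \<gamma> B"
proof -
  have "4 * norm (y - z) \<le> Kinv \<gamma> A" "4 * norm z \<le> Kinv \<gamma> B"
    using le_Kinv_if_le[OF K] assms(2,3) by simp_all
  moreover have "norm y \<le> norm (y - z) + norm z"
    using norm_triangle_sub by (metis add.commute)
  ultimately show ?thesis by simp
qed

lemma le_at_Inf_violation:
  fixes \<phi> \<psi> :: "real \<Rightarrow> real"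
  assumes "continuous_on {a..b} \<phi>" and "continuous_on {a..b} \<psi>" and "a < b"
    and "\<And>t. a < t \<Longrightarrow> t < b \<Longrightarrow> P t"
    and "ereal b \<le> Inf {ereal t | t. ereal a < ereal t \<and> P t \<and> \<not> \<phi> t \<le> \<psi> t}"
  shows "\<phi> b \<le> \<psi> b"
proof -
  have nonneg: "\<psi> t - \<phi> t \<ge> 0" if "t \<in> {a<..<b}" for t
  proof (rule ccontr)
    assume "\<not> \<psi> t - \<phi> t \<ge> 0"
    then have "ereal t \<in> {ereal t | t. ereal a < ereal t \<and> P t \<and> \<not> \<phi> t \<le> \<psi> t}"
      using that assms(4) by (intro CollectI exI[of _ t]) simp
    then have "ereal b \<le> ereal t"
      using assms(5) by (meson Inf_lower order_trans)
    then show False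
      using that by simp
  qed
  have "continuous_on (closure {a<..<b}) (\<lambda>t. \<psi> t - \<phi> t)"
    using assms(1-3) by (simp add: continuous_on_diff)
  moreover have "b \<in> closure {a<..<b}"
    using assms(3) by simp
  ultimately have "\<psi> b - \<phi> b \<ge> 0"
    using nonneg by (rule continuous_ge_on_closure)
  then show ?thesis by simp
qed

locale DoS_sequence =
  fixes h \<tau> :: "nat \<Rightarrow> real"
  assumes first_start_nonneg: "h 0 \<ge> 0"
    and duration_pos: "\<tau> n > 0"
    and separated: "h n + \<tau> n < h (Suc n)"
begin

lemma end_less_start: "m < n \<Longrightarrow> h m + \<tau> m < h n"
proof (induction n)
  case (Suc n)
  then show ?case
    using separated[of n] duration_pos[of n] by (cases "m = n") auto
qed simp

lemma start_mono: "m \<le> n \<Longrightarrow> h m \<le> h n"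
  using end_less_start[of m n] duration_pos[of m] by (cases "m = n") auto

lemma start_nonneg: "h n \<ge> 0"
  using start_mono[of 0 n] first_start_nonneg by simp

lemma start_in_DoS_set: "h n \<in> DoS_set h \<tau>"
  using duration_pos[of n] by (auto simp: DoS_set_def DoS_int_def)

lemma end_notin_DoS_set: "h m + \<tau> m \<notin> DoS_set h \<tau>"
proof
  assume "h m + \<tau> m \<in> DoS_set h \<tau>"
  then obtain j where "h j \<le> h m + \<tau> m" "h m + \<tau> m < h j + \<tau> j"
    by (auto simp: DoS_set_def DoS_int_def)
  then show False
    using end_less_start[of j m] end_less_start[of m j] duration_pos[of m]
    by (cases j m rule: linorder_cases) auto
qed

lemma DoS_int_index_less:
  assumes "t \<in> DoS_int h \<tau> m" and "t < h n"
  shows "m < n"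
  using assms start_mono[of n m] by (force simp: DoS_int_def)

lemma end_in_Theta: "m < n \<Longrightarrow> h m + \<tau> m \<in> Theta h \<tau> (h n)"
  using end_less_start[of m n] end_notin_DoS_set[of m] start_nonneg[of m] duration_pos[of m]
  by (auto simp: Theta_def)

lemma update_in_Theta:
  assumes ts0: "ts 0 = 0"
    and ts_DoS: "\<And>k m. ts k \<in> ereal ` DoS_int h \<tau> m \<Longrightarrow> ts (Suc k) = ereal (h m + \<tau> m)"
    and "Theta h \<tau> (h n) \<noteq> {}"
  shows "\<exists>k. ts k \<in> ereal ` Theta h \<tau> (h n)"
proof (cases "0 \<in> DoS_set h \<tau>")
  case False
  then have "ts 0 \<in> ereal ` Theta h \<tau> (h n)"
    using ts0 start_nonneg[of n] by (auto simp: Theta_def zero_ereal_def)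
  then show ?thesis ..
next
  case True
  then obtain m where m: "0 \<in> DoS_int h \<tau> m"
    by (auto simp: DoS_set_def)
  then have "m = 0"
    using DoS_int_index_less[OF m, of 0] first_start_nonneg duration_pos[of 0] end_less_start[of 0 m]
    by (cases m) (auto simp: DoS_int_def)
  then have "h 0 = 0"
    using m first_start_nonneg by (simp add: DoS_int_def)
  have "n \<noteq> 0"
    using assms(3) True \<open>h 0 = 0\<close> by (auto simp: Theta_def)
  have "ts 1 = ereal (h 0 + \<tau> 0)"
    using ts_DoS[of 0 0] m \<open>m = 0\<close> ts0 by (simp add: zero_ereal_def)
  then have "ts 1 \<in> ereal ` Theta h \<tau> (h n)"
    using end_in_Theta[of 0 n] \<open>n \<noteq> 0\<close> by simp
  then show ?thesis ..
qed

lemma update_times_step_mono: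
  assumes ts_noDoS: "\<And>k. ts k \<notin> ereal ` DoS_set h \<tau> \<Longrightarrow>
      ts (Suc k) = Inf {ereal t | t. ts k < ereal t \<and> Q k t}"
    and ts_DoS: "\<And>k m. ts k \<in> ereal ` DoS_int h \<tau> m \<Longrightarrow> ts (Suc k) = ereal (h m + \<tau> m)"
  shows "ts k \<le> ts (Suc k)"
proof (cases "ts k \<in> ereal ` DoS_set h \<tau>")
  case True
  then obtain m t where "ts k = ereal t" "t \<in> DoS_int h \<tau> m"
    by (auto simp: DoS_set_def)
  then show ?thesis
    using ts_DoS[of k m] by (simp add: DoS_int_def)
next
  case False
  then show ?thesis
    using ts_noDoS[of k] by (auto intro: Inf_greatest)
qed

lemma last_update_before_start:
  assumes ts0: "ts 0 = 0"
    and ts_step_mono: "\<And>k. ts k \<le> ts (Suc k)"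
    and ts_DoS: "\<And>k m. ts k \<in> ereal ` DoS_int h \<tau> m \<Longrightarrow> ts (Suc k) = ereal (h m + \<tau> m)"
    and nonZeno: "finite {k. ts k \<le> ereal (h n)}"
    and Theta_ne: "Theta h \<tau> (h n) \<noteq> {}"
  obtains k tk where "held_state h \<tau> ts x (h n) = x tk" and "ts k = ereal tk"
    and "tk \<notin> DoS_set h \<tau>" and "0 \<le> tk" and "tk < h n" and "ereal (h n) \<le> ts (Suc k)"
proof -
  define S where "S = {k. ts k \<in> ereal ` Theta h \<tau> (h n)}"
  have "finite S"
    by (rule finite_subset[OF _ nonZeno]) (auto simp: S_def Theta_def)
  moreover have "S \<noteq> {}"
    using update_in_Theta[OF ts0 ts_DoS Theta_ne] by (simp add: S_def)
  ultimately have "Sup S \<in> S" and Sup_max: "\<And>j. j \<in> S \<Longrightarrow> j \<le> Sup S"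
    by (simp_all add: cSup_eq_Max le_cSup_finite)
  then obtain tk where tk: "ts (Sup S) = ereal tk" "tk \<in> Theta h \<tau> (h n)"
    by (auto simp: S_def)
  then have "tk \<notin> DoS_set h \<tau>" "0 \<le> tk" "tk < h n"
    using start_in_DoS_set[of n] by (auto simp: Theta_def less_eq_real_def)
  moreover have "held_state h \<tau> ts x (h n) = x tk"
    using Theta_ne tk by (simp add: held_state_def last_idx_def S_def)
  moreover have "ereal (h n) \<le> ts (Suc (Sup S))"
  proof (rule ccontr)
    assume "\<not> ereal (h n) \<le> ts (Suc (Sup S))"
    moreover have "ereal tk \<le> ts (Suc (Sup S))"
      using ts_step_mono tk by metis
    ultimately obtain s where s: "ts (Suc (Sup S)) = ereal s" "tk \<le> s" "s < h n"
      by (cases "ts (Suc (Sup S))") auto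
    show False
    proof (cases "s \<in> DoS_set h \<tau>")
      case False
      then have "Suc (Sup S) \<in> S"
        using s \<open>0 \<le> tk\<close> by (auto simp: S_def Theta_def)
      then show False
        using Sup_max by fastforce
    next
      case True
      then obtain m where m: "s \<in> DoS_int h \<tau> m"
        by (auto simp: DoS_set_def)
      then have "Suc (Suc (Sup S)) \<in> S"
        using ts_DoS[of "Suc (Sup S)" m] s end_in_Theta[OF DoS_int_index_less[OF m s(3)]]
        by (simp add: S_def)
      then show False
        using Sup_max by fastforce
    qed
  qed
  ultimately show ?thesis
    using that tk(1) by blast
qed

lemma held_state_satisfies_trigger:
  fixes x :: "real \<Rightarrow> 'a::real_normed_vector" and V :: "'a \<Rightarrow> real"
  assumes ts0: "ts 0 = 0"
    and ts_noDoS: "\<And>k. ts k \<notin> ereal ` DoS_set h \<tau> \<Longrightarrow>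
      ts (Suc k) = Inf {ereal t | t. ts k < ereal t \<and> 0 \<le> t \<and> ereal t < T \<and>
        \<not> \<gamma> (4 * norm (x (real_of_ereal (ts k)) - x t)) \<le> l * V (x t)}"
    and ts_DoS: "\<And>k m. ts k \<in> ereal ` DoS_int h \<tau> m \<Longrightarrow> ts (Suc k) = ereal (h m + \<tau> m)"
    and nonZeno: "finite {k. ts k \<le> ereal (h n)}"
    and x_cont: "continuous_on {0..h n} x" and V_cont: "continuous_on UNIV V"
    and \<gamma>_cont: "continuous_on {0..} \<gamma>"
    and "ereal (h n) < T" and Theta_ne: "Theta h \<tau> (h n) \<noteq> {}"
  obtains tk where "held_state h \<tau> ts x (h n) = x tk"
    and "\<gamma> (4 * norm (x tk - x (h n))) \<le> l * V (x (h n))"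
proof -
  have "ts k \<le> ts (Suc k)" for k
    by (rule update_times_step_mono[where Q = "\<lambda>k t. 0 \<le> t \<and> ereal t < T \<and>
        \<not> \<gamma> (4 * norm (x (real_of_ereal (ts k)) - x t)) \<le> l * V (x t)"])
      (use ts_noDoS ts_DoS in auto)
  then obtain k tk where held: "held_state h \<tau> ts x (h n) = x tk" and tk: "ts k = ereal tk"
    "tk \<notin> DoS_set h \<tau>" "0 \<le> tk" "tk < h n" and no_update: "ereal (h n) \<le> ts (Suc k)"
    using last_update_before_start[OF ts0 _ ts_DoS nonZeno Theta_ne] by blast
  have x_cont': "continuous_on {tk..h n} x"
    using x_cont by (rule continuous_on_subset) (use tk(3) in auto)
  have "continuous_on {tk..h n} (\<lambda>t. \<gamma> (4 * norm (x tk - x t)))"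
    using \<gamma>_cont by (rule continuous_on_compose2) (auto intro!: continuous_intros x_cont')
  moreover have "continuous_on {tk..h n} (\<lambda>t. l * V (x t))"
    using continuous_on_compose2[OF V_cont x_cont' subset_UNIV] by (intro continuous_intros) auto
  ultimately have "\<gamma> (4 * norm (x tk - x (h n))) \<le> l * V (x (h n))"
  proof (rule le_at_Inf_violation[where P = "\<lambda>t. 0 \<le> t \<and> ereal t < T"])
    show "tk < h n" by fact
    show "0 \<le> t \<and> ereal t < T" if "tk < t" "t < h n" for t
      using that tk(3) \<open>ereal (h n) < T\<close> by (auto intro: less_trans[of _ "ereal (h n)"])
    show "ereal (h n) \<le> Inf {ereal t |t. ereal tk < ereal t \<and> (0 \<le> t \<and> ereal t < T) \<and>
        \<not> \<gamma> (4 * norm (x tk - x t)) \<le> l * V (x t)}"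
      using no_update ts_noDoS[of k] tk(1,2) by (simp add: conj_assoc image_iff)
  qed
  with held show ?thesis
    using that by blast
qed

end

theorem lemma1:
  fixes f :: "'a::euclidean_space \<Rightarrow> 'u::real_normed_vector \<Rightarrow> 'a"
    and kfb :: "'a \<Rightarrow> 'u"
    and V :: "'a \<Rightarrow> real" and DV :: "'a \<Rightarrow> 'a \<Rightarrow> real"
    and \<alpha>1 \<alpha>2 \<gamma>2 :: "real \<Rightarrow> real"
    and lam c \<mu> :: real
    and h \<tau> :: "nat \<Rightarrow> real"
    and ts :: "nat \<Rightarrow> ereal"
    and x :: "real \<Rightarrow> 'a"
    and T :: ereal
  assumes f_cont: "continuous_on UNIV (\<lambda>(z, u). f z u)"
    and k_cont: "continuous_on UNIV kfb"
    and V_deriv: "\<And>z. (V has_derivative DV z) (at z)"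
    and K_inf: "class_K_inf \<alpha>1" "class_K_inf \<alpha>2" "class_K_inf \<gamma>2"
    and lam_pos: "lam > 0"
    and V_bounds: "\<And>z. \<alpha>1 (norm z) \<le> V z \<and> V z \<le> \<alpha>2 (norm z)"
    and ISS: "\<And>z e. DV z (f z (kfb (z + e))) \<le> - lam * V z + \<gamma>2 (norm e)"
    and c_range: "0 < c" "c < 1"
    and mu_pos: "\<mu> > 0"
    and gamma_mu: "\<And>r. r \<ge> 0 \<Longrightarrow> \<gamma>2 (4 * r) \<le> \<mu> * \<alpha>1 r"
    and h0: "h 0 \<ge> 0"
    and tau_pos: "\<And>n. \<tau> n > 0"
    and h_sep: "\<And>n. h n + \<tau> n < h (Suc n)"
    (* solution on its maximal domain [0,T[ *)
    and T_pos: "T > 0"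
    and x_cont: "continuous_on {t. 0 \<le> t \<and> ereal t < T} x"
    and x_ode: "\<And>t. 0 \<le> t \<Longrightarrow> ereal t < T \<Longrightarrow>
        (x has_vector_derivative f (x t) (kfb (held_state h \<tau> ts x t)))
          (at t within {s. t \<le> s \<and> ereal s < T})"
    and ts0: "ts 0 = 0"
    and ts_noDoS: "\<And>k. ts k \<notin> ereal ` DoS_set h \<tau> \<Longrightarrow>
        ts (Suc k) = Inf {ereal t | t. ts k < ereal t \<and> 0 \<le> t \<and> ereal t < T \<and>
            \<not> (\<gamma>2 (4 * norm (x (real_of_ereal (ts k)) - x t)) \<le> lam * (1 - c) * V (x t))}"
    and ts_DoS: "\<And>k n. ts k \<in> ereal ` DoS_int h \<tau> n \<Longrightarrow> ts (Suc k) = ereal (h n + \<tau> n)"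
    (* well-posedness: finitely many updates on bounded intervals (k(t) is a maximum) *)
    and nonZeno: "\<And>t. finite {k. ts k \<le> ereal t}"
  shows "\<forall>n. ereal (h n) < T \<longrightarrow>
           norm (held_state h \<tau> ts x (h n))
             \<le> 1/4 * Kinv \<gamma>2 (lam * (1 - c) * V (x (h n))) + 1/4 * Kinv \<gamma>2 (\<mu> * V (x (h n)))"
proof (intro allI impI)
  interpret DoS_sequence h \<tau>
    using h0 tau_pos h_sep by unfold_locales
  fix n
  assume "ereal (h n) < T"
  have V_nonneg: "V z \<ge> 0" for z
    using V_bounds[of z] class_K_inf_nonneg[OF K_inf(1) norm_ge_zero, of z] by linarith
  show "norm (held_state h \<tau> ts x (h n))
    \<le> 1/4 * Kinv \<gamma>2 (lam * (1 - c) * V (x (h n))) + 1/4 * Kinv \<gamma>2 (\<mu> * V (x (h n)))"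
  proof (cases "Theta h \<tau> (h n) = {}")
    case True
    then have "held_state h \<tau> ts x (h n) = 0"
      by (simp add: held_state_def last_idx_def)
    moreover have "Kinv \<gamma>2 (lam * (1 - c) * V (x (h n))) \<ge> 0" "Kinv \<gamma>2 (\<mu> * V (x (h n))) \<ge> 0"
      using V_nonneg lam_pos c_range mu_pos by (auto intro!: Kinv_nonneg_inverse(1)[OF K_inf(3)])
    ultimately show ?thesis by simp
  next
    case False
    have "continuous_on {0..h n} x"
      using x_cont by (rule continuous_on_subset)
        (use \<open>ereal (h n) < T\<close> in \<open>auto intro: le_less_trans[of _ "ereal (h n)"]\<close>)
    moreover have "continuous_on UNIV V"
      using V_deriv has_derivative_continuous continuous_at_imp_continuous_on by blast
    moreover have "continuous_on {0..} \<gamma>2"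
      using K_inf(3) by (simp add: class_K_inf_def)
    ultimately obtain tk where held: "held_state h \<tau> ts x (h n) = x tk"
      and trig: "\<gamma>2 (4 * norm (x tk - x (h n))) \<le> lam * (1 - c) * V (x (h n))"
      using held_state_satisfies_trigger[OF ts0 ts_noDoS ts_DoS nonZeno _ _ _ \<open>ereal (h n) < T\<close> False]
      by blast
    have "\<gamma>2 (4 * norm (x (h n))) \<le> \<mu> * \<alpha>1 (norm (x (h n)))"
      by (rule gamma_mu[OF norm_ge_zero])
    also have "\<dots> \<le> \<mu> * V (x (h n))"
      using V_bounds mu_pos by simp
    finally show ?thesis
      using held norm_le_Kinv_sum[OF K_inf(3) trig] by simp
  qed
qed

end
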